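(* Let $j\in\{1,\ldots,d\}$ and let $A,B\subseteq\mathbb{R}^d$ be compactly $j$-generated cones with $(A\cap B)\setminus\{0\}\neq\emptyset$. Then $A\cap B$ is compactly $j$-generated and $\sigma_j(A\cap B)=\sigma_j(A)\cap\sigma_j(B)$.
   Context: For $A\subseteq\mathbb{R}^d$ and $j\in\{1,\ldots,d\}$, $\sigma_j(A)=\{x=(x^1,\ldots,x^d)\in A: x^j=1\}$. A cone $A\subseteq\mathbb{R}^d$ is compactly $j$-generated if $\sigma_j(A)$ is compact and non-empty and $A=\{\lambda x:\lambda\ge0,\ x\in\sigma_j(A)\}$. *)

theory Defs
  imports "HOL-Analysis.Analysis"
begin

definition sigma_slice :: "'n::finite \<Rightarrow> (real ^ 'n) set \<Rightarrow> (real ^ 'n) set" where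
  "sigma_slice j A = {x \<in> A. x $ j = 1}"

definition compactly_generated :: "'n::finite \<Rightarrow> (real ^ 'n) set \<Rightarrow> bool" where
  "compactly_generated j A \<longleftrightarrow>
     cone A \<and> compact (sigma_slice j A) \<and> sigma_slice j A \<noteq> {} \<and>
     A = {c *\<^sub>R x | c x. c \<ge> 0 \<and> x \<in> sigma_slice j A}"

end

theory Submission
  imports Defs
begin

(* Every nonzero point z of a compactly j-generated cone has z_j > 0, and the rescaled point
   z / z_j lies in the slice of every compactly j-generated cone containing z. Hence the
   intersection of the two slices, which is compact and (by the hypothesis) nonempty,
   generates A \<inter> B. *)

lemma sigma_slice_Int: "sigma_slice j (A \<inter> B) = sigma_slice j A \<inter> sigma_slice j B"
  by (auto simp: sigma_slice_def)

lemma compactly_generated_normalize: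
  assumes "compactly_generated j A" "y \<in> A" "y \<noteq> 0"
  shows "y $ j > 0" "(1 / y $ j) *\<^sub>R y \<in> sigma_slice j A"
proof -
  from assms(1,2) obtain c x where y: "y = c *\<^sub>R x" and "c \<ge> 0" and x: "x \<in> sigma_slice j A"
    unfolding compactly_generated_def by blast
  have xj: "x $ j = 1" using x by (simp add: sigma_slice_def)
  with y have yj: "y $ j = c" by simp
  have "c \<noteq> 0" using y assms(3) by auto
  with \<open>c \<ge> 0\<close> yj show "y $ j > 0" by simp
  have "(1 / y $ j) *\<^sub>R y = x" unfolding yj y using \<open>c \<noteq> 0\<close> xj by simp
  with x show "(1 / y $ j) *\<^sub>R y \<in> sigma_slice j A" by simp
qed

lemma cone_eq_generated_by_sigma_slice:
  assumes "cone C" and "sigma_slice j C \<noteq> {}"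
    and normalize: "\<And>z. z \<in> C \<Longrightarrow> z \<noteq> 0 \<Longrightarrow> z $ j > 0 \<and> (1 / z $ j) *\<^sub>R z \<in> C"
  shows "C = {c *\<^sub>R x | c x. c \<ge> 0 \<and> x \<in> sigma_slice j C}"
proof
  show "{c *\<^sub>R x | c x. c \<ge> 0 \<and> x \<in> sigma_slice j C} \<subseteq> C"
    using \<open>cone C\<close> by (auto simp: cone_def sigma_slice_def)
next
  obtain s where s: "s \<in> sigma_slice j C" using assms(2) by blast
  show "C \<subseteq> {c *\<^sub>R x | c x. c \<ge> 0 \<and> x \<in> sigma_slice j C}"
  proof
    fix z assume z: "z \<in> C"
    show "z \<in> {c *\<^sub>R x | c x. c \<ge> 0 \<and> x \<in> sigma_slice j C}"
    proof (cases "z = 0")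
      case True
      then have "z = 0 *\<^sub>R s" by simp
      with s show ?thesis by blast
    next
      case False
      with normalize z have pos: "z $ j > 0" and w: "(1 / z $ j) *\<^sub>R z \<in> C" by auto
      have "z = z $ j *\<^sub>R ((1 / z $ j) *\<^sub>R z)" using pos by simp
      moreover have "(1 / z $ j) *\<^sub>R z \<in> sigma_slice j C" using w pos by (simp add: sigma_slice_def)
      ultimately show ?thesis using pos by fastforce
    qed
  qed
qed

theorem lemmaA1:
  fixes j :: "'n::finite" and A B :: "(real ^ 'n) set"
  assumes "compactly_generated j A" and "compactly_generated j B"
    and "(A \<inter> B) - {0} \<noteq> {}"
  shows "compactly_generated j (A \<inter> B) \<and>
         sigma_slice j (A \<inter> B) = sigma_slice j A \<inter> sigma_slice j B"
proof -
  note normA = compactly_generated_normalize[OF assms(1)]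
  note normB = compactly_generated_normalize[OF assms(2)]
  have cone: "cone (A \<inter> B)"
    using assms(1,2) by (auto simp: compactly_generated_def cone_def)
  have compact: "compact (sigma_slice j (A \<inter> B))"
    using assms(1,2) by (auto simp: compactly_generated_def sigma_slice_Int intro: compact_Int)
  from assms(3) obtain y where y: "y \<in> A" "y \<in> B" "y \<noteq> 0" by auto
  have nonempty: "sigma_slice j (A \<inter> B) \<noteq> {}"
    using normA(2)[OF y(1,3)] normB(2)[OF y(2,3)] by (auto simp: sigma_slice_Int)
  have "A \<inter> B = {c *\<^sub>R x | c x. c \<ge> 0 \<and> x \<in> sigma_slice j (A \<inter> B)}"
    using cone nonempty normA normB
    by (intro cone_eq_generated_by_sigma_slice) (auto simp: sigma_slice_def)
  then show ?thesis
    unfolding compactly_generated_def using cone compact nonempty by (intro conjI sigma_slice_Int)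
qed

end
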